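(* Let $\Gamma\rightrightarrows M$ be a Lie groupoid, $E$ a differentiable vector bundle over $M$ with a smooth metric $\phi$, and $\lambda$ a unital continuous pseudo-representation of $\Gamma$ on $E$ with $c(\lambda)<1$. Then for all $g\in\Gamma$, $\|\lambda(g)^{-1}\|\le\dfrac{b(\lambda)}{1-c(\lambda)}$, and for all $g,h$ with $sg=sh$, $\|\Delta^\lambda(g,h)\|\le c(\lambda)\dfrac{b(\lambda)}{1-c(\lambda)}$, with the convention $0\cdot\infty=0$.
   Context: A pseudo-representation is a family of linear maps $\lambda_g:E_{sg}\to E_{tg}$ forming a section of $L(s^*E,t^*E)$; unital means $\lambda_{1_x}=\mathrm{id}$. (Under the hypotheses each $\lambda_g$ is invertible.) Operator norms $\|\cdot\|$ on $L(E_x,E_y)$ are induced by $\phi$. $b(\lambda):=\sup_{g\in\Gamma}\|\lambda(g)\|$ and $c(\lambda):=\sup\{\|\lambda(g'g)-\lambda(g')\lambda(g)\|:sg'=tg\}$ (possibly infinite). $\Delta^\lambda(g,h):=\lambda_g\lambda_h^{-1}-\lambda_{gh^{-1}}:E_{th}\to E_{tg}$. *)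

theory Defs
  imports "HOL-Analysis.Analysis"
begin

definition groupoid ::
  "'g set \<Rightarrow> 'm set \<Rightarrow> ('g \<Rightarrow> 'm) \<Rightarrow> ('g \<Rightarrow> 'm) \<Rightarrow> ('g \<Rightarrow> 'g \<Rightarrow> 'g)
   \<Rightarrow> ('m \<Rightarrow> 'g) \<Rightarrow> ('g \<Rightarrow> 'g) \<Rightarrow> bool" where
  "groupoid \<Gamma> M s t gmul u i \<longleftrightarrow>
     (\<forall>g\<in>\<Gamma>. s g \<in> M \<and> t g \<in> M) \<and>
     (\<forall>x\<in>M. u x \<in> \<Gamma> \<and> s (u x) = x \<and> t (u x) = x) \<and>
     (\<forall>g'\<in>\<Gamma>. \<forall>g\<in>\<Gamma>. s g' = t g \<longrightarrow>
         gmul g' g \<in> \<Gamma> \<and> s (gmul g' g) = s g \<and> t (gmul g' g) = t g') \<and>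
     (\<forall>g''\<in>\<Gamma>. \<forall>g'\<in>\<Gamma>. \<forall>g\<in>\<Gamma>. s g'' = t g' \<longrightarrow> s g' = t g \<longrightarrow>
         gmul (gmul g'' g') g = gmul g'' (gmul g' g)) \<and>
     (\<forall>g\<in>\<Gamma>. gmul g (u (s g)) = g \<and> gmul (u (t g)) g = g) \<and>
     (\<forall>g\<in>\<Gamma>. i g \<in> \<Gamma> \<and> s (i g) = t g \<and> t (i g) = s g \<and>
         gmul g (i g) = u (t g) \<and> gmul (i g) g = u (s g))"

text \<open>A vector bundle with metric, fibrewise: each fibre E x is a finite-dimensional
  linear subspace of a real inner product space (the metric is the ambient inner product).\<close>
definition metric_bundle :: "'m set \<Rightarrow> ('m \<Rightarrow> 'v::real_inner set) \<Rightarrow> bool" where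
  "metric_bundle M E \<longleftrightarrow> (\<forall>x\<in>M. subspace (E x) \<and> (\<exists>B. finite B \<and> E x = span B))"

definition linear_map_on :: "'v::real_vector set \<Rightarrow> 'w::real_vector set \<Rightarrow> ('v \<Rightarrow> 'w) \<Rightarrow> bool" where
  "linear_map_on A B f \<longleftrightarrow> f ` A \<subseteq> B \<and>
     (\<forall>x\<in>A. \<forall>y\<in>A. f (x + y) = f x + f y) \<and> (\<forall>c. \<forall>x\<in>A. f (c *\<^sub>R x) = c *\<^sub>R f x)"

definition opnorm_on :: "'v::real_normed_vector set \<Rightarrow> ('v \<Rightarrow> 'w::real_normed_vector) \<Rightarrow> real" where
  "opnorm_on A f = Sup ((\<lambda>v. norm (f v)) ` {v \<in> A. norm v \<le> 1})"

definition unital_pseudo_rep ::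
  "'g set \<Rightarrow> 'm set \<Rightarrow> ('g \<Rightarrow> 'm) \<Rightarrow> ('g \<Rightarrow> 'm) \<Rightarrow> ('m \<Rightarrow> 'g) \<Rightarrow> ('m \<Rightarrow> 'v::real_vector set)
   \<Rightarrow> ('g \<Rightarrow> 'v \<Rightarrow> 'v) \<Rightarrow> bool" where
  "unital_pseudo_rep \<Gamma> M s t u E lam \<longleftrightarrow>
     (\<forall>g\<in>\<Gamma>. linear_map_on (E (s g)) (E (t g)) (lam g)) \<and>
     (\<forall>x\<in>M. \<forall>v\<in>E x. lam (u x) v = v)"

definition b_const :: "'g set \<Rightarrow> ('g \<Rightarrow> 'm) \<Rightarrow> ('m \<Rightarrow> 'v::real_normed_vector set)
   \<Rightarrow> ('g \<Rightarrow> 'v \<Rightarrow> 'v) \<Rightarrow> ereal" where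
  "b_const \<Gamma> s E lam = (SUP g\<in>\<Gamma>. ereal (opnorm_on (E (s g)) (lam g)))"

definition c_const :: "'g set \<Rightarrow> ('g \<Rightarrow> 'm) \<Rightarrow> ('g \<Rightarrow> 'm) \<Rightarrow> ('g \<Rightarrow> 'g \<Rightarrow> 'g)
   \<Rightarrow> ('m \<Rightarrow> 'v::real_normed_vector set) \<Rightarrow> ('g \<Rightarrow> 'v \<Rightarrow> 'v) \<Rightarrow> ereal" where
  "c_const \<Gamma> s t gmul E lam =
     (SUP p\<in>{(g', g). g' \<in> \<Gamma> \<and> g \<in> \<Gamma> \<and> s g' = t g}.
        ereal (opnorm_on (E (s (snd p)))
          (\<lambda>v. lam (gmul (fst p) (snd p)) v - lam (fst p) (lam (snd p) v))))"

definition Delta :: "('g \<Rightarrow> 'm) \<Rightarrow> ('g \<Rightarrow> 'g \<Rightarrow> 'g) \<Rightarrow> ('g \<Rightarrow> 'g)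
   \<Rightarrow> ('m \<Rightarrow> 'v::real_vector set) \<Rightarrow> ('g \<Rightarrow> 'v \<Rightarrow> 'v) \<Rightarrow> 'g \<Rightarrow> 'g \<Rightarrow> 'v \<Rightarrow> 'v" where
  "Delta s gmul i E lam g h =
     (\<lambda>v. lam g (inv_into (E (s h)) (lam h) v) - lam (gmul g (i h)) v)"

end

theory Submission
  imports Defs
begin

(* For a composable pair (g', g) write
   D(g', g) = lam(g' g) - lam(g') lam(g) for the defect; by definition |D(g', g)| <= c.
   If g' g is a unit then lam(g' g) is the identity, so |lam(g') lam(g) v| >= (1 - c) |v|.
   Applied to (g^-1, g) and (g, g^-1), this makes lam(g) injective and lam(g) lam(g^-1)
   an injective, hence surjective, endomorphism of the finite-dimensional fibre E(t g);
   thus lam(g) is bijective and |lam(g)^-1 w| <= |lam(g^-1) w| / (1 - c) <= b |w| / (1 - c).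
   For s g = s h, with k = g h^-1 and v = lam(h)^-1 w, one has Delta(g,h) w = D(k, h) v,
   whence |Delta(g,h)| <= c |lam(h)^-1| <= c b / (1 - c). *)

lemma linear_map_on_zero:
  assumes "linear_map_on A B f" and "0 \<in> A"
  shows "f 0 = 0"
proof -
  have "f (0 *\<^sub>R 0) = 0 *\<^sub>R f 0" using assms unfolding linear_map_on_def by blast
  then show ?thesis by simp
qed

lemma linear_map_on_diff:
  assumes "subspace A" and "linear_map_on A B f" and "x \<in> A" and "y \<in> A"
  shows "f (x - y) = f x - f y"
proof -
  have "(-1) *\<^sub>R y \<in> A" using assms(1,4) subspace_scale by blast
  then have "f (x + (-1) *\<^sub>R y) = f x + (-1) *\<^sub>R f y"
    using assms(2-4) unfolding linear_map_on_def by metis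
  then show ?thesis by simp
qed

lemma linear_map_on_compose:
  assumes "linear_map_on A B f" and "linear_map_on B C g"
  shows "linear_map_on A C (\<lambda>x. g (f x))"
  using assms unfolding linear_map_on_def by (auto simp: image_subset_iff)

lemma linear_map_on_subtract:
  assumes "linear_map_on A B f" and "linear_map_on A B' h"
  shows "linear_map_on A UNIV (\<lambda>x. f x - h x)"
  using assms unfolding linear_map_on_def by (auto simp: algebra_simps scaleR_diff_right)

text \<open>A map linear on a subspace is the restriction of a globally linear map
  (extend it from a basis of the subspace).\<close>
lemma linear_map_on_extend:
  assumes "subspace S" and "linear_map_on S T f"
  shows "\<exists>g. linear g \<and> (\<forall>x\<in>S. g x = f x)"
proof -
  obtain C where C: "C \<subseteq> S" "independent C" "S \<subseteq> span C"
    using real_vector.basis_exists[of S] by metis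
  obtain g where g: "linear g" "\<forall>x\<in>C. g x = f x"
    using real_vector.linear_independent_extend[OF C(2)] by blast
  let ?Agree = "{x \<in> S. g x = f x}"
  have "subspace ?Agree"
    unfolding subspace_def
  proof (intro conjI allI ballI)
    show "0 \<in> ?Agree"
      using linear_map_on_zero[OF assms(2)] assms(1) g(1) subspace_0 linear_0 by fastforce
  next
    fix x y assume "x \<in> ?Agree" "y \<in> ?Agree"
    then show "x + y \<in> ?Agree"
      using assms g(1) unfolding linear_map_on_def by (simp add: subspace_add linear_add)
  next
    fix c x assume "x \<in> ?Agree"
    then show "c *\<^sub>R x \<in> ?Agree"
      using assms g(1) unfolding linear_map_on_def by (simp add: subspace_scale linear_scale)
  qed
  then have "span C \<subseteq> ?Agree" using C(1) g(2) by (intro span_minimal) auto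
  with C(3) g(1) show ?thesis by blast
qed

lemma orthogonal_expansion:
  fixes C :: "'v::real_inner set"
  assumes "finite C" and "pairwise orthogonal C" and "v \<in> span C"
  shows "v = (\<Sum>c\<in>C. ((c \<bullet> v) / (c \<bullet> c)) *\<^sub>R c)"
proof (rule vector_eq_dot_span)
  show "v \<in> span C" by fact
  show "(\<Sum>c\<in>C. ((c \<bullet> v) / (c \<bullet> c)) *\<^sub>R c) \<in> span C"
    by (intro span_sum span_scale span_base)
  fix a assume a: "a \<in> C"
  have "a \<bullet> (\<Sum>c\<in>C. ((c \<bullet> v) / (c \<bullet> c)) *\<^sub>R c) = (\<Sum>c\<in>C. ((c \<bullet> v) / (c \<bullet> c)) * (a \<bullet> c))"
    by (simp add: inner_sum_right)
  also have "\<dots> = (\<Sum>c\<in>C. if c = a then a \<bullet> v else 0)"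
    using a assms(2) by (intro sum.cong) (auto simp: pairwise_def orthogonal_def)
  also have "\<dots> = a \<bullet> v" using a assms(1) by simp
  finally show "a \<bullet> v = a \<bullet> (\<Sum>c\<in>C. ((c \<bullet> v) / (c \<bullet> c)) *\<^sub>R c)" by simp
qed

text \<open>A linear map is bounded on a finite-dimensional subspace: expanding in an orthogonal
  basis C gives |g v| \<le> (\<Sum>c\<in>C. |g c| / |c|) |v| by Cauchy-Schwarz.\<close>
lemma linear_bounded_on_finite_span:
  fixes g :: "'v::real_inner \<Rightarrow> 'w::real_normed_vector"
  assumes "finite B" and "linear g"
  shows "\<exists>K\<ge>0. \<forall>v\<in>span B. norm (g v) \<le> K * norm v"
proof -
  obtain C where C: "finite C" "span C = span B" "pairwise orthogonal C"
    using basis_orthogonal[OF assms(1)] by blast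
  define K where "K = (\<Sum>c\<in>C. norm (g c) / norm c)"
  have "norm (g v) \<le> K * norm v" if v: "v \<in> span B" for v
  proof -
    have "norm (g v) = norm (\<Sum>c\<in>C. ((c \<bullet> v) / (c \<bullet> c)) *\<^sub>R g c)"
      using orthogonal_expansion[OF C(1,3), of v] v C(2) assms(2)
      by (metis (no_types, lifting) linear_scale linear_sum sum.cong)
    also have "\<dots> \<le> (\<Sum>c\<in>C. norm (((c \<bullet> v) / (c \<bullet> c)) *\<^sub>R g c))"
      by (rule norm_sum)
    also have "\<dots> \<le> (\<Sum>c\<in>C. norm v * (norm (g c) / norm c))"
    proof (rule sum_mono)
      fix c
      have "norm (((c \<bullet> v) / (c \<bullet> c)) *\<^sub>R g c) = \<bar>c \<bullet> v\<bar> / (norm c)^2 * norm (g c)"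
        by (simp add: power2_norm_eq_inner)
      also have "\<dots> \<le> (norm c * norm v) / (norm c)^2 * norm (g c)"
        by (intro mult_right_mono divide_right_mono Cauchy_Schwarz_ineq2) auto
      also have "\<dots> = norm v * (norm (g c) / norm c)"
        by (cases "c = 0") (simp_all add: power2_eq_square field_simps)
      finally show "norm (((c \<bullet> v) / (c \<bullet> c)) *\<^sub>R g c) \<le> norm v * (norm (g c) / norm c)" .
    qed
    also have "\<dots> = K * norm v" unfolding K_def by (simp add: sum_distrib_left mult.commute)
    finally show ?thesis .
  qed
  moreover have "K \<ge> 0" unfolding K_def by (intro sum_nonneg) simp
  ultimately show ?thesis by blast
qed

lemma linear_map_on_bounded:
  fixes f :: "'v::real_inner \<Rightarrow> 'w::real_normed_vector"
  assumes "finite B" and "linear_map_on (span B) T f"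
  shows "\<exists>K\<ge>0. \<forall>v\<in>span B. norm (f v) \<le> K * norm v"
proof -
  obtain g where "linear g" and g: "\<forall>x\<in>span B. g x = f x"
    using linear_map_on_extend[OF subspace_span assms(2)] by blast
  then show ?thesis using linear_bounded_on_finite_span[OF assms(1)] by metis
qed

lemma opnorm_on_bdd_above:
  assumes "\<forall>v\<in>A. norm (f v) \<le> K * norm v" and "K \<ge> 0"
  shows "bdd_above ((\<lambda>v. norm (f v)) ` {v \<in> A. norm v \<le> 1})"
proof (rule bdd_aboveI)
  fix x assume "x \<in> (\<lambda>v. norm (f v)) ` {v \<in> A. norm v \<le> 1}"
  then obtain v where "v \<in> A" "norm v \<le> 1" "x = norm (f v)" by auto
  moreover have "K * norm v \<le> K" using \<open>norm v \<le> 1\<close> assms(2) by (simp add: mult_left_le)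
  ultimately show "x \<le> K" using assms(1) by force
qed

lemma opnorm_on_le:
  assumes "0 \<in> A" and "\<forall>v\<in>A. norm (f v) \<le> K * norm v" and "K \<ge> 0"
  shows "opnorm_on A f \<le> K"
  unfolding opnorm_on_def
proof (rule cSup_least)
  show "(\<lambda>v. norm (f v)) ` {v \<in> A. norm v \<le> 1} \<noteq> {}" using assms(1) by auto
  fix x assume "x \<in> (\<lambda>v. norm (f v)) ` {v \<in> A. norm v \<le> 1}"
  then obtain v where "v \<in> A" "norm v \<le> 1" "x = norm (f v)" by auto
  moreover have "K * norm v \<le> K" using \<open>norm v \<le> 1\<close> assms(3) by (simp add: mult_left_le)
  ultimately show "x \<le> K" using assms(2) by force
qed

lemma opnorm_on_nonneg:
  fixes f :: "'v::real_inner \<Rightarrow> 'w::real_normed_vector"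
  assumes "finite B" and "linear_map_on (span B) T f"
  shows "0 \<le> opnorm_on (span B) f"
proof -
  obtain K where "K \<ge> 0" "\<forall>v\<in>span B. norm (f v) \<le> K * norm v"
    using linear_map_on_bounded[OF assms] by blast
  then have "norm (f 0) \<le> opnorm_on (span B) f"
    unfolding opnorm_on_def by (intro cSup_upper opnorm_on_bdd_above) (auto simp: span_zero)
  then show ?thesis by (smt (verit) norm_ge_zero)
qed

lemma opnorm_on_bound:
  fixes f :: "'v::real_inner \<Rightarrow> 'w::real_normed_vector"
  assumes "finite B" and "linear_map_on (span B) T f" and "v \<in> span B"
  shows "norm (f v) \<le> opnorm_on (span B) f * norm v"
proof (cases "v = 0")
  case True
  then show ?thesis using linear_map_on_zero[OF assms(2)] by (simp add: span_zero)
next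
  case False
  obtain K where "K \<ge> 0" "\<forall>v\<in>span B. norm (f v) \<le> K * norm v"
    using linear_map_on_bounded[OF assms(1,2)] by blast
  note bdd = opnorm_on_bdd_above[OF this(2,1)]
  let ?w = "(1 / norm v) *\<^sub>R v"
  have "?w \<in> span B" using assms(3) span_scale by blast
  then have "norm (f ?w) \<le> opnorm_on (span B) f"
    unfolding opnorm_on_def using False by (intro cSup_upper[OF _ bdd]) auto
  moreover have "f ?w = (1 / norm v) *\<^sub>R f v"
    using assms(2,3) unfolding linear_map_on_def by blast
  ultimately show ?thesis using False by (simp add: divide_le_eq mult.commute)
qed

lemma linear_map_on_inj_imp_surj:
  fixes f :: "'v::real_vector \<Rightarrow> 'v"
  assumes "finite B" and "linear_map_on (span B) (span B) f" and "inj_on f (span B)"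
  shows "f ` span B = span B"
proof -
  obtain C where C: "C \<subseteq> span B" "independent C" "span B \<subseteq> span C"
    using real_vector.basis_exists[of "span B"] by metis
  have spanC: "span C = span B" using C(1,3) by (metis span_minimal subspace_span subset_antisym)
  have finC: "finite C"
    using real_vector.independent_span_bound[OF assms(1) C(2)] C(1) by auto
  obtain g where g: "linear g" "\<forall>x\<in>span B. g x = f x"
    using linear_map_on_extend[OF subspace_span assms(2)] by blast
  have inj_g: "inj_on g (span C)" using assms(3) g(2) spanC by (metis inj_on_cong)
  have ind_gC: "independent (g ` C)"
    using real_vector.linear_independent_injective_image[OF g(1) C(2) inj_g] .
  have card_gC: "card (g ` C) = card C"
    using inj_g by (metis card_image inj_on_subset span_superset)
  have gC_sub: "g ` C \<subseteq> span C"
    using C(1) g(2) assms(2) spanC unfolding linear_map_on_def by force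
  have "span (g ` C) = span C"
  proof (rule ccontr)
    assume "span (g ` C) \<noteq> span C"
    moreover have "span (g ` C) \<subseteq> span C" using gC_sub by (simp add: span_minimal)
    ultimately obtain a where a: "a \<in> span C" "a \<notin> span (g ` C)" by blast
    have "independent (insert a (g ` C))" using real_vector.independent_insertI[OF a(2) ind_gC] .
    moreover have "insert a (g ` C) \<subseteq> span C" using a(1) gC_sub by auto
    ultimately have "card (insert a (g ` C)) \<le> card C"
      using real_vector.independent_span_bound[OF finC] by blast
    moreover have "a \<notin> g ` C" using a(2) span_base by blast
    ultimately show False using card_gC finC by simp
  qed
  then have "g ` span B = span B" using real_vector.linear_span_image[OF g(1), of C] spanC by simp
  then show ?thesis using g(2) by (metis image_cong)
qed

lemma ereal_divide_bound:
  assumes "0 \<le> \<beta>" and "ereal \<beta> \<le> b" and "r < 1"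
  shows "ereal (\<beta> / (1 - r)) \<le> b / (1 - ereal r)"
  using assms by (cases b) (simp_all add: one_ereal_def divide_ereal_def divide_inverse
    mult_right_mono)

locale contracting_pseudo_rep =
  fixes \<Gamma> :: "'g set" and M :: "'m set" and s t :: "'g \<Rightarrow> 'm"
    and gmul :: "'g \<Rightarrow> 'g \<Rightarrow> 'g" and u :: "'m \<Rightarrow> 'g" and i :: "'g \<Rightarrow> 'g"
    and E :: "'m \<Rightarrow> 'v::real_inner set" and lam :: "'g \<Rightarrow> 'v \<Rightarrow> 'v"
  assumes groupoid: "groupoid \<Gamma> M s t gmul u i"
    and fibres: "metric_bundle M E"
    and pseudo_rep: "unital_pseudo_rep \<Gamma> M s t u E lam"
    and defect_lt_1: "c_const \<Gamma> s t gmul E lam < 1"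
begin

abbreviation b_lam :: ereal where "b_lam \<equiv> b_const \<Gamma> s E lam"
abbreviation c_lam :: ereal where "c_lam \<equiv> c_const \<Gamma> s t gmul E lam"

definition defect :: "'g \<Rightarrow> 'g \<Rightarrow> 'v \<Rightarrow> 'v" where
  "defect g' g = (\<lambda>v. lam (gmul g' g) v - lam g' (lam g v))"

text \<open>The real number underlying c(\<lambda>); it is finite as soon as \<Gamma> is nonempty.\<close>
definition c_real :: real where "c_real = real_of_ereal c_lam"

lemma ends_in_M: "g \<in> \<Gamma> \<Longrightarrow> s g \<in> M \<and> t g \<in> M"
  using groupoid unfolding groupoid_def by blast

lemma mul_arrow:
  "g' \<in> \<Gamma> \<Longrightarrow> g \<in> \<Gamma> \<Longrightarrow> s g' = t g \<Longrightarrow>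
     gmul g' g \<in> \<Gamma> \<and> s (gmul g' g) = s g \<and> t (gmul g' g) = t g'"
  using groupoid unfolding groupoid_def by blast

lemma mul_assoc:
  "g'' \<in> \<Gamma> \<Longrightarrow> g' \<in> \<Gamma> \<Longrightarrow> g \<in> \<Gamma> \<Longrightarrow> s g'' = t g' \<Longrightarrow> s g' = t g \<Longrightarrow>
     gmul (gmul g'' g') g = gmul g'' (gmul g' g)"
  using groupoid unfolding groupoid_def by blast

lemma mul_unit_right: "g \<in> \<Gamma> \<Longrightarrow> gmul g (u (s g)) = g"
  using groupoid unfolding groupoid_def by blast

lemma inverse_arrow:
  "g \<in> \<Gamma> \<Longrightarrow> i g \<in> \<Gamma> \<and> s (i g) = t g \<and> t (i g) = s g \<and>
     gmul g (i g) = u (t g) \<and> gmul (i g) g = u (s g)"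
  using groupoid unfolding groupoid_def by blast

lemma fibre_span: "x \<in> M \<Longrightarrow> \<exists>B. finite B \<and> E x = span B"
  using fibres unfolding metric_bundle_def by blast

lemma fibre_subspace: "x \<in> M \<Longrightarrow> subspace (E x)"
  using fibres unfolding metric_bundle_def by blast

lemma fibre_zero: "g \<in> \<Gamma> \<Longrightarrow> 0 \<in> E (t g)"
  using fibre_subspace ends_in_M subspace_0 by blast

lemma lam_linear: "g \<in> \<Gamma> \<Longrightarrow> linear_map_on (E (s g)) (E (t g)) (lam g)"
  using pseudo_rep unfolding unital_pseudo_rep_def by blast

lemma lam_unit: "x \<in> M \<Longrightarrow> v \<in> E x \<Longrightarrow> lam (u x) v = v"
  using pseudo_rep unfolding unital_pseudo_rep_def by blast

lemma fibre_opnorm_bound: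
  assumes "x \<in> M" and "linear_map_on (E x) T f" and "v \<in> E x"
  shows "norm (f v) \<le> opnorm_on (E x) f * norm v"
  using fibre_span[OF assms(1)] opnorm_on_bound assms(2,3) by metis

lemma fibre_opnorm_nonneg:
  assumes "x \<in> M" and "linear_map_on (E x) T f"
  shows "0 \<le> opnorm_on (E x) f"
  using fibre_span[OF assms(1)] opnorm_on_nonneg assms(2) by metis

lemma opnorm_lam_le_b: "g \<in> \<Gamma> \<Longrightarrow> ereal (opnorm_on (E (s g)) (lam g)) \<le> b_lam"
  unfolding b_const_def by (rule SUP_upper)

lemma lam_compose_linear:
  assumes "g' \<in> \<Gamma>" "g \<in> \<Gamma>" "s g' = t g"
  shows "linear_map_on (E (s g)) (E (t g')) (\<lambda>v. lam g' (lam g v))"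
  using linear_map_on_compose[OF lam_linear[OF assms(2)]] lam_linear[OF assms(1)] assms(3) by simp

lemma defect_linear:
  assumes "g' \<in> \<Gamma>" "g \<in> \<Gamma>" "s g' = t g"
  shows "linear_map_on (E (s g)) UNIV (defect g' g)"
  unfolding defect_def
  using linear_map_on_subtract[OF _ lam_compose_linear[OF assms]] lam_linear[of "gmul g' g"]
    mul_arrow[OF assms] by simp

lemma opnorm_defect_le_c:
  assumes "g' \<in> \<Gamma>" "g \<in> \<Gamma>" "s g' = t g"
  shows "ereal (opnorm_on (E (s g)) (defect g' g)) \<le> c_lam"
  unfolding c_const_def defect_def using assms by (intro SUP_upper2[of "(g', g)"]) auto

lemma c_lam_nonneg:
  assumes "g \<in> \<Gamma>"
  shows "0 \<le> c_lam"
proof -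
  have "s (i g) = t g" "i g \<in> \<Gamma>" using inverse_arrow[OF assms] by auto
  then have "ereal (opnorm_on (E (s g)) (defect (i g) g)) \<le> c_lam"
    and "0 \<le> opnorm_on (E (s g)) (defect (i g) g)"
    using opnorm_defect_le_c defect_linear fibre_opnorm_nonneg ends_in_M assms by blast+
  then show ?thesis by (metis order_trans zero_ereal_def ereal_less_eq(3))
qed

lemma c_lam_eq:
  assumes "g \<in> \<Gamma>"
  shows "c_lam = ereal c_real" and "0 \<le> c_real" and "c_real < 1"
  using c_lam_nonneg[OF assms] defect_lt_1 unfolding c_real_def by (cases c_lam; simp)+

lemma defect_bound:
  assumes "g' \<in> \<Gamma>" "g \<in> \<Gamma>" "s g' = t g" "v \<in> E (s g)"
  shows "norm (defect g' g v) \<le> c_real * norm v"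
proof -
  have "norm (defect g' g v) \<le> opnorm_on (E (s g)) (defect g' g) * norm v"
    using fibre_opnorm_bound defect_linear ends_in_M assms by blast
  moreover have "opnorm_on (E (s g)) (defect g' g) \<le> c_real"
    using opnorm_defect_le_c[OF assms(1-3)] c_lam_eq(1)[OF assms(2)] by simp
  ultimately show ?thesis by (meson mult_right_mono norm_ge_zero order_trans)
qed

text \<open>If g' g is a unit, then \<lambda>(g') \<lambda>(g) is within c(\<lambda>) of the identity, hence bounded below.\<close>
lemma near_identity_bounded_below:
  assumes "g' \<in> \<Gamma>" "g \<in> \<Gamma>" "s g' = t g" "gmul g' g = u (s g)" "v \<in> E (s g)"
  shows "(1 - c_real) * norm v \<le> norm (lam g' (lam g v))"
proof -
  have "lam (gmul g' g) v = v" using assms(4,5) lam_unit ends_in_M[OF assms(2)] by simp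
  then have "norm (v - lam g' (lam g v)) \<le> c_real * norm v"
    using defect_bound[OF assms(1-3,5)] unfolding defect_def by simp
  moreover have "norm v \<le> norm (lam g' (lam g v)) + norm (v - lam g' (lam g v))"
    by (metis add.commute norm_triangle_sub)
  ultimately show ?thesis by (simp add: algebra_simps)
qed

lemma near_identity_inj:
  assumes "g' \<in> \<Gamma>" "g \<in> \<Gamma>" "s g' = t g" "gmul g' g = u (s g)"
  shows "inj_on (\<lambda>v. lam g' (lam g v)) (E (s g))"
proof (rule inj_onI)
  fix x y assume xy: "x \<in> E (s g)" "y \<in> E (s g)" "lam g' (lam g x) = lam g' (lam g y)"
  have sub: "subspace (E (s g))" using fibre_subspace ends_in_M assms(2) by blast
  then have "lam g' (lam g (x - y)) = 0"
    using linear_map_on_diff[OF sub lam_compose_linear[OF assms(1-3)] xy(1,2)] xy(3) by simp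
  then have "(1 - c_real) * norm (x - y) \<le> 0"
    using near_identity_bounded_below[OF assms subspace_diff[OF sub xy(1,2)]] by simp
  then show "x = y" using c_lam_eq(3)[OF assms(2)] by (simp add: mult_le_0_iff)
qed

text \<open>Each \<lambda>(g) is invertible: injective because \<lambda>(g\<inverse>) \<lambda>(g) is, and surjective because
  \<lambda>(g) \<lambda>(g\<inverse>) is an injective endomorphism of the finite-dimensional fibre E(t g).\<close>
lemma lam_bij:
  assumes g: "g \<in> \<Gamma>"
  shows "bij_betw (lam g) (E (s g)) (E (t g))"
proof -
  have ig: "i g \<in> \<Gamma>" "s (i g) = t g" "t (i g) = s g" "gmul g (i g) = u (t g)"
    "gmul (i g) g = u (s g)"
    using inverse_arrow[OF g] by auto
  have "inj_on (lam (i g) \<circ> lam g) (E (s g))"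
    using near_identity_inj[OF ig(1) g] ig by (simp add: comp_def)
  then have inj: "inj_on (lam g) (E (s g))" by (rule inj_on_imageI2)
  obtain B where B: "finite B" "E (t g) = span B" using fibre_span ends_in_M g by blast
  have "(\<lambda>w. lam g (lam (i g) w)) ` E (t g) = E (t g)"
    using linear_map_on_inj_imp_surj[OF B(1)] lam_compose_linear[OF g ig(1)]
      near_identity_inj[OF g ig(1)] ig B(2) by simp
  moreover have "lam (i g) ` E (t g) \<subseteq> E (s g)" "lam g ` E (s g) \<subseteq> E (t g)"
    using lam_linear[OF ig(1)] lam_linear[OF g] ig unfolding linear_map_on_def by simp_all
  ultimately have "lam g ` E (s g) = E (t g)" by blast
  with inj show ?thesis unfolding bij_betw_def by blast
qed

text \<open>Estimate for the inverse: for w = \<lambda>(g) v we have (1 - c) |v| \<le> |\<lambda>(g\<inverse>) w| \<le> b |w|,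
  with the finite constant |\<lambda>(g\<inverse>)| \<le> b(\<lambda>) in place of b.\<close>
lemma inverse_estimate:
  assumes g: "g \<in> \<Gamma>"
  obtains \<beta> where "0 \<le> \<beta>" and "ereal \<beta> \<le> b_lam"
    and "\<And>w. w \<in> E (t g) \<Longrightarrow>
           norm (inv_into (E (s g)) (lam g) w) \<le> \<beta> / (1 - c_real) * norm w"
proof
  have ig: "i g \<in> \<Gamma>" "s (i g) = t g" "t (i g) = s g" "gmul (i g) g = u (s g)"
    using inverse_arrow[OF g] by auto
  define \<beta> where "\<beta> = opnorm_on (E (t g)) (lam (i g))"
  show "0 \<le> \<beta>" "ereal \<beta> \<le> b_lam"
    using fibre_opnorm_nonneg lam_linear opnorm_lam_le_b ends_in_M ig unfolding \<beta>_def by metis+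
  fix w assume w: "w \<in> E (t g)"
  let ?v = "inv_into (E (s g)) (lam g) w"
  have v: "?v \<in> E (s g)" "lam g ?v = w"
    using lam_bij[OF g] w by (auto intro: bij_betw_inv_into_right inv_into_into
      simp: bij_betw_def)
  have "(1 - c_real) * norm ?v \<le> norm (lam (i g) w)"
    using near_identity_bounded_below[OF ig(1) g ig(2,4) v(1)] v(2) by simp
  also have "\<dots> \<le> \<beta> * norm w"
    using fibre_opnorm_bound lam_linear ends_in_M ig w unfolding \<beta>_def by metis
  finally show "norm ?v \<le> \<beta> / (1 - c_real) * norm w"
    using c_lam_eq(3)[OF g] by (simp add: field_simps)
qed

lemma inverse_opnorm_bound:
  assumes g: "g \<in> \<Gamma>"
  shows "ereal (opnorm_on (E (t g)) (inv_into (E (s g)) (lam g))) \<le> b_lam / (1 - c_lam)"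
proof -
  obtain \<beta> where \<beta>: "0 \<le> \<beta>" "ereal \<beta> \<le> b_lam"
    and est: "\<And>w. w \<in> E (t g) \<Longrightarrow>
                norm (inv_into (E (s g)) (lam g) w) \<le> \<beta> / (1 - c_real) * norm w"
    using inverse_estimate[OF g] by blast
  note c = c_lam_eq[OF g]
  have "opnorm_on (E (t g)) (inv_into (E (s g)) (lam g)) \<le> \<beta> / (1 - c_real)"
    using \<beta>(1) c(3) by (intro opnorm_on_le[OF fibre_zero[OF g]] ballI est) auto
  also have "ereal (\<beta> / (1 - c_real)) \<le> b_lam / (1 - c_lam)"
    using ereal_divide_bound[OF \<beta> c(3)] c(1) by simp
  finally show ?thesis by simp
qed

text \<open>Second assertion: writing v = \<lambda>(h)\<inverse> w and k = g h\<inverse>, the map \<Delta>(g,h) sends w to the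
  defect of the pair (k, h) at v, so |\<Delta>(g,h)| \<le> c |\<lambda>(h)\<inverse>| \<le> c b / (1 - c).\<close>
lemma Delta_as_defect:
  assumes g: "g \<in> \<Gamma>" and h: "h \<in> \<Gamma>" and sgh: "s g = s h" and w: "w \<in> E (t h)"
  shows "Delta s gmul i E lam g h w = defect (gmul g (i h)) h (inv_into (E (s h)) (lam h) w)"
proof -
  have ih: "i h \<in> \<Gamma>" "s (i h) = t h" "t (i h) = s h" "gmul (i h) h = u (s h)"
    using inverse_arrow[OF h] by auto
  have "gmul (gmul g (i h)) h = g"
    using mul_assoc[OF g ih(1) h] ih sgh mul_unit_right[OF g] by simp
  moreover have "lam h (inv_into (E (s h)) (lam h) w) = w"
    using lam_bij[OF h] w by (simp add: bij_betw_inv_into_right)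
  ultimately show ?thesis unfolding Delta_def defect_def by simp
qed

lemma Delta_opnorm_bound:
  assumes g: "g \<in> \<Gamma>" and h: "h \<in> \<Gamma>" and sgh: "s g = s h"
  shows "ereal (opnorm_on (E (t h)) (Delta s gmul i E lam g h))
           \<le> c_lam * (b_lam / (1 - c_lam))"
proof -
  have ih: "i h \<in> \<Gamma>" "s (i h) = t h" "t (i h) = s h" using inverse_arrow[OF h] by auto
  have k: "gmul g (i h) \<in> \<Gamma>" "s (gmul g (i h)) = t h"
    using mul_arrow[OF g ih(1)] ih sgh by auto
  obtain \<beta> where \<beta>: "0 \<le> \<beta>" "ereal \<beta> \<le> b_lam"
    and est: "\<And>w. w \<in> E (t h) \<Longrightarrow>
                norm (inv_into (E (s h)) (lam h) w) \<le> \<beta> / (1 - c_real) * norm w"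
    using inverse_estimate[OF h] by blast
  note c = c_lam_eq[OF h]
  have "norm (Delta s gmul i E lam g h w) \<le> c_real * (\<beta> / (1 - c_real)) * norm w"
    if w: "w \<in> E (t h)" for w
  proof -
    let ?v = "inv_into (E (s h)) (lam h) w"
    have "?v \<in> E (s h)" using lam_bij[OF h] w by (simp add: bij_betw_def inv_into_into)
    then have "norm (Delta s gmul i E lam g h w) \<le> c_real * norm ?v"
      using Delta_as_defect[OF g h sgh w] defect_bound[OF k(1) h k(2)] by simp
    also have "\<dots> \<le> c_real * (\<beta> / (1 - c_real) * norm w)"
      using est[OF w] c(2) by (rule mult_left_mono)
    finally show ?thesis by simp
  qed
  then have "opnorm_on (E (t h)) (Delta s gmul i E lam g h) \<le> c_real * (\<beta> / (1 - c_real))"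
    using \<beta>(1) c(2,3) by (intro opnorm_on_le[OF fibre_zero[OF h]] ballI) simp_all
  also have "ereal (c_real * (\<beta> / (1 - c_real))) \<le> c_lam * (b_lam / (1 - c_lam))"
    using ereal_mult_left_mono[OF ereal_divide_bound[OF \<beta> c(3)], of "ereal c_real"] c(1,2)
    by simp
  finally show ?thesis by simp
qed

end

theorem mainTheorem14:
  fixes \<Gamma> :: "'g set" and M :: "'m set" and s t :: "'g \<Rightarrow> 'm"
    and gmul :: "'g \<Rightarrow> 'g \<Rightarrow> 'g" and u :: "'m \<Rightarrow> 'g" and i :: "'g \<Rightarrow> 'g"
    and E :: "'m \<Rightarrow> 'v::real_inner set" and lam :: "'g \<Rightarrow> 'v \<Rightarrow> 'v"
  assumes "groupoid \<Gamma> M s t gmul u i"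
    and "metric_bundle M E"
    and "unital_pseudo_rep \<Gamma> M s t u E lam"
    and "c_const \<Gamma> s t gmul E lam < 1"
  shows "(\<forall>g\<in>\<Gamma>. bij_betw (lam g) (E (s g)) (E (t g)) \<and>
           ereal (opnorm_on (E (t g)) (inv_into (E (s g)) (lam g)))
             \<le> b_const \<Gamma> s E lam / (1 - c_const \<Gamma> s t gmul E lam)) \<and>
         (\<forall>g\<in>\<Gamma>. \<forall>h\<in>\<Gamma>. s g = s h \<longrightarrow>
           ereal (opnorm_on (E (t h)) (Delta s gmul i E lam g h))
             \<le> c_const \<Gamma> s t gmul E lam * (b_const \<Gamma> s E lam / (1 - c_const \<Gamma> s t gmul E lam)))"
proof -
  interpret contracting_pseudo_rep \<Gamma> M s t gmul u i E lam
    using assms by unfold_locales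
  show ?thesis using lam_bij inverse_opnorm_bound Delta_opnorm_bound by blast
qed

end
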